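(* Let $a\in\mathbf{R}$, $0<\tau_0^*<\tau^*$, and let $p(z,\xi)=(\xi+ia)^2\int_{\tau_0^*}^{\tau^*}e^{-(\tau^*-s)(\xi+ia)^2}w(s,z)\,ds$. Then: (i) for every $b>0$ and all integers $\alpha,\beta\ge0$ there exists $C>0$ such that $|\partial_z^\alpha\partial_\xi^\beta p(z,\xi)|\le C\langle\xi\rangle^{-\beta}$ for all $z\in\mathbf{C}$ with $|\operatorname{Im}z|<b$ and all $\xi\in\mathbf{R}$; (ii) there exists $C>0$ such that $|p(x,\xi)-w(\tau^*,x)|\le C\langle\xi\rangle^{-2}$ for all $x,\xi\in\mathbf{R}$.
   Context: $\langle\xi\rangle=\sqrt{1+|\xi|^2}$. Fix $a\in\mathbf{R}$; $K_a(\tau,y)=\frac{1}{\sqrt{4\pi\tau}}\exp(-\frac{|y|^2}{4\tau}+ay)$, and $w(\tau,x)=\int_0^\infty K_a(\tau,x-y)\,dy=\pi^{-1/2}e^{\tau a^2}\int_{-\infty}^{(x-2\tau a)/\sqrt{4\tau}}e^{-\theta^2}d\theta$, extended holomorphically in $x\in\mathbf{C}$ by the latter formula. The function $p$ is the symbol (acting on the right variable) of the operator $f\mapsto H_a\int_{\tau_0^*}^{\tau^*}U_a(\tau^*-s)[w(s,\cdot)f]\,ds$, where $H_a=-(\frac{d}{dy}-a)^2$ and $(U_a(\tau)\varphi)(y)=\int K_a(\tau,y-x)\varphi(x)dx$. *)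

theory Defs
  imports "HOL-Analysis.Analysis"
begin

text \<open>Holomorphic extension of the integral of exp(-theta^2) from -infinity to u:
  sqrt pi / 2 + (contour integral of exp(-theta^2) along the segment [0,u]),
  the segment integral being written out as u * int_0^1 exp(-(t u)^2) dt.\<close>
definition gauss_cum :: "complex \<Rightarrow> complex" where
  "gauss_cum u = complex_of_real (sqrt pi / 2)
      + u * integral {0..1} (\<lambda>t::real. exp (- ((complex_of_real t * u)\<^sup>2)))"

definition w_fun :: "real \<Rightarrow> real \<Rightarrow> complex \<Rightarrow> complex" where
  "w_fun a \<tau> z = complex_of_real (exp (\<tau> * a\<^sup>2) / sqrt pi)
      * gauss_cum ((z - complex_of_real (2 * \<tau> * a)) / complex_of_real (sqrt (4 * \<tau>)))"

definition p_sym :: "real \<Rightarrow> real \<Rightarrow> real \<Rightarrow> complex \<Rightarrow> real \<Rightarrow> complex" where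
  "p_sym a \<tau>0 \<tau> z \<xi> = (complex_of_real \<xi> + \<i> * complex_of_real a)\<^sup>2
      * integral {\<tau>0..\<tau>} (\<lambda>s. exp (- complex_of_real (\<tau> - s)
            * (complex_of_real \<xi> + \<i> * complex_of_real a)\<^sup>2) * w_fun a s z)"

definition vderiv :: "(real \<Rightarrow> complex) \<Rightarrow> real \<Rightarrow> complex" where
  "vderiv f x = vector_derivative f (at x)"

definition jbr :: "real \<Rightarrow> real" where
  "jbr \<xi> = sqrt (1 + \<xi>\<^sup>2)"

end

theory Submission
  imports Defs "HOL-Complex_Analysis.Complex_Analysis"
begin

(* Write Psi_g(eta) = int_{tau0}^{tau} eta^2 exp(-(tau-s) eta^2) g(s) ds for continuous g; this is an
   entire function of eta and p(z,xi) = Psi_g(xi + i a) with g = w(.,z).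
   (i) By the Leibniz rule, d_z^alpha d_xi^beta p(z,xi) = Psi_g^(beta)(xi + i a) with g = d_z^alpha w(.,z).
       Because w(s,.) is an affinely rescaled Gaussian error function, these g are bounded uniformly for
       s in [tau0,tau] and |Im z| < b.  For large |xi| one has |eta'|^2 <= 2 Re eta'^2 on the disc of
       radius |xi|/4 about xi + i a, so |Psi_g| <= 2 sup|g| there, and Cauchy's estimate on that disc
       gives the decay <xi>^(-beta); for small |xi| Cauchy's estimate on unit discs suffices.
   (ii) Since eta^2 exp(-(tau-s) eta^2) = d/ds exp(-(tau-s) eta^2), integration by parts in s writes
       p(x,xi) - w(tau,x) as a boundary term at tau0 plus an integral against d_s w(s,x); both are
       O(<xi>^(-2)) since |exp(-t eta^2)| = exp(t a^2) exp(-t xi^2) and w, d_s w are bounded for real x. *)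

lemma integral_param_has_field_derivative:
  fixes W :: "nat \<Rightarrow> complex \<Rightarrow> real \<Rightarrow> complex"
  assumes deriv: "\<And>n z s. s \<in> {c..d} \<Longrightarrow> ((\<lambda>z. W n z s) has_field_derivative W (Suc n) z s) (at z)"
    and cont: "\<And>n. continuous_on (UNIV \<times> {c..d}) (\<lambda>(z,s). W n z s)"
  shows "((\<lambda>z. integral {c..d} (W n z)) has_field_derivative integral {c..d} (W (Suc n) z)) (at z)"
proof -
  have cont_s: "continuous_on {c..d} (W m z)" for m z
    by (rule continuous_on_compose2[OF cont[of m], where f="\<lambda>s. (z,s)", simplified])
       (auto intro!: continuous_intros)
  have "((\<lambda>z. integral (cbox c d) (W n z)) has_field_derivative integral (cbox c d) (W (Suc n) z))
          (at z within UNIV)"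
    by (rule leibniz_rule_field_derivative[where fx="W (Suc n)"])
       (auto intro!: deriv integrable_continuous_interval cont_s cont)
  then show ?thesis by simp
qed

lemma higher_deriv_integral_param:
  fixes W :: "nat \<Rightarrow> complex \<Rightarrow> real \<Rightarrow> complex"
  assumes "\<And>n z s. s \<in> {c..d} \<Longrightarrow> ((\<lambda>z. W n z s) has_field_derivative W (Suc n) z s) (at z)"
    and "\<And>n. continuous_on (UNIV \<times> {c..d}) (\<lambda>(z,s). W n z s)"
  shows "(deriv ^^ n) (\<lambda>z. integral {c..d} (W 0 z)) = (\<lambda>z. integral {c..d} (W n z))"
proof (induction n)
  case (Suc n)
  show ?case using integral_param_has_field_derivative[of c d W, OF assms, of n] Suc
    by (auto intro!: ext DERIV_imp_deriv)
qed simp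

lemma vderiv_funpow_line:
  assumes "\<And>n \<eta>. (F n has_field_derivative F (Suc n) \<eta>) (at \<eta>)"
  shows "(vderiv ^^ n) (\<lambda>\<xi>. F 0 (complex_of_real \<xi> + c)) = (\<lambda>\<xi>. F n (complex_of_real \<xi> + c))"
proof (induction n)
  case (Suc n)
  have "vderiv (\<lambda>\<xi>. F n (complex_of_real \<xi> + c)) \<xi> = F (Suc n) (complex_of_real \<xi> + c)" for \<xi>
  proof -
    have "((\<lambda>z. F n (z + c)) has_field_derivative F (Suc n) (complex_of_real \<xi> + c) * 1)
            (at (complex_of_real \<xi>))"
      by (rule DERIV_chain2[OF assms]) (auto intro!: derivative_eq_intros)
    from has_vector_derivative_real_field[OF this]
    show ?thesis unfolding vderiv_def by (simp add: vector_derivative_at)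
  qed
  then show ?case unfolding funpow.simps o_apply Suc.IH by (intro ext)
qed simp

section \<open>The heat factor and its derivatives\<close>

text \<open>Polynomials in (eta,t) are encoded as lists of monomials c eta^m t^j.  The eta-derivative of
  P(eta,t) exp(-t eta^2) is Q(eta,t) exp(-t eta^2), where Q = mono_diff P.\<close>

fun mono_eval :: "(complex \<times> nat \<times> nat) list \<Rightarrow> complex \<Rightarrow> real \<Rightarrow> complex" where
  "mono_eval [] \<eta> t = 0"
| "mono_eval ((c,m,j) # P) \<eta> t = c * \<eta> ^ m * complex_of_real t ^ j + mono_eval P \<eta> t"

fun mono_diff :: "(complex \<times> nat \<times> nat) list \<Rightarrow> (complex \<times> nat \<times> nat) list" where
  "mono_diff [] = []"
| "mono_diff ((c,m,j) # P) = (c * of_nat m, m - 1, j) # (-2 * c, Suc m, Suc j) # mono_diff P"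

lemma mono_eval_has_derivative:
  "((\<lambda>\<eta>. mono_eval P \<eta> t) has_field_derivative
      mono_eval (mono_diff P) \<eta> t + 2 * of_real t * \<eta> * mono_eval P \<eta> t) (at \<eta>)"
proof (induction P)
  case (Cons x P)
  obtain c m j where x: "x = (c,m,j)" by (metis prod_cases3)
  have d_head: "((\<lambda>\<eta>. c * \<eta> ^ m * complex_of_real t ^ j) has_field_derivative
          c * (of_nat m * \<eta> ^ (m - 1)) * complex_of_real t ^ j) (at \<eta>)"
    by (auto intro!: derivative_eq_intros)
  have d_head_split: "c * (of_nat m * \<eta> ^ (m - 1)) * complex_of_real t ^ j
      = c * of_nat m * \<eta> ^ (m - 1) * complex_of_real t ^ j
        + (-2 * c) * \<eta> ^ Suc m * complex_of_real t ^ Suc j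
        + 2 * of_real t * \<eta> * (c * \<eta> ^ m * complex_of_real t ^ j)"
    by (simp add: algebra_simps)
  show ?case using DERIV_add[OF d_head Cons.IH] unfolding x by (simp add: d_head_split algebra_simps)
qed simp

lemma mono_gauss_has_derivative:
  "((\<lambda>\<eta>. mono_eval P \<eta> t * exp (- complex_of_real t * \<eta>\<^sup>2)) has_field_derivative
      mono_eval (mono_diff P) \<eta> t * exp (- complex_of_real t * \<eta>\<^sup>2)) (at \<eta>)"
proof -
  have "((\<lambda>\<eta>. mono_eval P \<eta> t * exp (- complex_of_real t * \<eta>\<^sup>2)) has_field_derivative
      (mono_eval (mono_diff P) \<eta> t + 2 * of_real t * \<eta> * mono_eval P \<eta> t) * exp (- complex_of_real t * \<eta>\<^sup>2)
      + mono_eval P \<eta> t * (exp (- complex_of_real t * \<eta>\<^sup>2) * (- complex_of_real t * (2 * \<eta>)))) (at \<eta>)"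
    by (auto intro!: derivative_eq_intros mono_eval_has_derivative simp: power2_eq_square)
  then show ?thesis by (simp add: algebra_simps)
qed

lemma continuous_on_mono_eval: "continuous_on S (\<lambda>(\<eta>,t). mono_eval P \<eta> t)"
  by (induction P rule: mono_diff.induct) (auto intro!: continuous_intros simp: split_beta)

text \<open>heat_factor tau n eta s is the n-th eta-derivative of eta^2 exp(-(tau - s) eta^2).\<close>

definition heat_factor :: "real \<Rightarrow> nat \<Rightarrow> complex \<Rightarrow> real \<Rightarrow> complex" where
  "heat_factor \<tau> n \<eta> s =
     mono_eval ((mono_diff ^^ n) [(1,2,0)]) \<eta> (\<tau> - s) * exp (- complex_of_real (\<tau> - s) * \<eta>\<^sup>2)"

lemma heat_factor_0: "heat_factor \<tau> 0 \<eta> s = \<eta>\<^sup>2 * exp (- complex_of_real (\<tau> - s) * \<eta>\<^sup>2)"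
  unfolding heat_factor_def by (simp add: power2_eq_square)

lemma norm_heat_factor_0:
  "norm (heat_factor \<tau> 0 \<eta> s) = (norm \<eta>)\<^sup>2 * exp (- (\<tau> - s) * Re (\<eta>\<^sup>2))"
  unfolding heat_factor_0 by (simp add: norm_mult norm_power norm_exp_eq_Re)

lemma heat_factor_has_derivative:
  "((\<lambda>\<eta>. heat_factor \<tau> n \<eta> s) has_field_derivative heat_factor \<tau> (Suc n) \<eta> s) (at \<eta>)"
  unfolding heat_factor_def funpow.simps o_apply by (rule mono_gauss_has_derivative)

lemma continuous_on_heat_factor: "continuous_on S (\<lambda>(\<eta>,s). heat_factor \<tau> n \<eta> s)"
proof -
  have "continuous_on S ((\<lambda>(\<eta>,t). mono_eval ((mono_diff ^^ n) [(1,2,0)]) \<eta> t) \<circ> (\<lambda>x. (fst x, \<tau> - snd x)))"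
    by (rule continuous_on_compose) (auto intro!: continuous_intros continuous_on_mono_eval)
  then show ?thesis
    unfolding heat_factor_def split_beta o_def by (auto intro!: continuous_intros)
qed

section \<open>The Gaussian error function\<close>

lemma gauss_cum_has_derivative: "(gauss_cum has_field_derivative exp (- (u\<^sup>2))) (at u)"
proof -
  define f where "f u t = exp (- ((complex_of_real t * u)\<^sup>2))" for u t
  define f' where "f' u t = f u t * (- (2 * (complex_of_real t * u) * complex_of_real t))" for u t
  have cont_f: "continuous_on {0..1} (f u)" for u unfolding f_def by (auto intro!: continuous_intros)
  have cont_f': "continuous_on {0..1} (f' u)" for u
    unfolding f'_def f_def by (auto intro!: continuous_intros)
  have "((\<lambda>u. integral (cbox 0 1) (f u)) has_field_derivative integral (cbox 0 1) (f' u))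
          (at u within UNIV)"
    by (rule leibniz_rule_field_derivative[where fx=f'])
       (auto intro!: derivative_eq_intros continuous_intros integrable_continuous_interval cont_f
         simp: f_def f'_def split_beta power2_eq_square)
  then have deriv: "(gauss_cum has_field_derivative integral {0..1} (f u) + u * integral {0..1} (f' u)) (at u)"
    unfolding gauss_cum_def f_def[symmetric] by (auto intro!: derivative_eq_intros)
  \<comment> \<open>The derivative is d/dt (t f(u,t)) integrated over [0,1].\<close>
  have "((\<lambda>t. f u t + u * f' u t) has_integral
          ((\<lambda>t. complex_of_real t * f u t) 1 - (\<lambda>t. complex_of_real t * f u t) 0)) {0..1}"
  proof (rule fundamental_theorem_of_calculus)
    fix t :: real
    have "((\<lambda>z. z * exp (- ((z * u)\<^sup>2))) has_field_derivative f u t + u * f' u t) (at (complex_of_real t))"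
      unfolding f_def f'_def by (auto intro!: derivative_eq_intros simp: power2_eq_square algebra_simps)
    from has_vector_derivative_real_field[OF this]
    show "((\<lambda>t. complex_of_real t * f u t) has_vector_derivative f u t + u * f' u t) (at t within {0..1})"
      unfolding f_def by (rule has_vector_derivative_at_within)
  qed simp
  then have "integral {0..1} (\<lambda>t. f u t + u * f' u t) = exp (- (u\<^sup>2))"
    by (simp add: f_def integral_unique)
  moreover have "integral {0..1} (\<lambda>t. f u t + u * f' u t) = integral {0..1} (f u) + u * integral {0..1} (f' u)"
    by (subst integral_add) (auto intro!: integrable_continuous_interval continuous_intros cont_f cont_f')
  ultimately show ?thesis using deriv by simp
qed

lemma gauss_cum_holomorphic: "gauss_cum holomorphic_on UNIV"
  using gauss_cum_has_derivative by (auto simp: holomorphic_on_def field_differentiable_def)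

lemma deriv_gauss_cum: "deriv gauss_cum = (\<lambda>u. exp (- (u\<^sup>2)))"
  using gauss_cum_has_derivative by (auto intro!: ext DERIV_imp_deriv)

lemma higher_deriv_gauss_cum_has_derivative:
  "((deriv ^^ n) gauss_cum has_field_derivative (deriv ^^ Suc n) gauss_cum u) (at u)"
proof -
  have "(deriv ^^ n) gauss_cum holomorphic_on UNIV"
    by (rule holomorphic_higher_deriv[OF gauss_cum_holomorphic]) auto
  then show ?thesis
    by (simp add: DERIV_deriv_iff_field_differentiable holomorphic_on_imp_differentiable_at)
qed

lemma continuous_on_higher_deriv_gauss_cum: "continuous_on S ((deriv ^^ n) gauss_cum)"
  by (rule holomorphic_on_imp_continuous_on, rule holomorphic_on_subset,
      rule holomorphic_higher_deriv[OF gauss_cum_holomorphic]) auto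

lemma norm_exp_neg_square: "norm (exp (- (u\<^sup>2))) \<le> exp ((Im u)\<^sup>2)"
proof -
  have "Re (- (u\<^sup>2)) = (Im u)\<^sup>2 - (Re u)\<^sup>2" by (simp add: power2_eq_square)
  then show ?thesis by (simp add: norm_exp_eq_Re)
qed

lemma has_integral_arctan_scaled:
  assumes "x \<noteq> 0"
  shows "((\<lambda>t. 1 / (1 + (t * x)\<^sup>2)) has_integral arctan x / x) {0..1}"
proof -
  have "((\<lambda>t. 1 / (1 + (t * x)\<^sup>2)) has_integral (arctan (1 * x) / x - arctan (0 * x) / x)) {0..1}"
  proof (rule fundamental_theorem_of_calculus)
    fix t :: real
    have "((\<lambda>t. arctan (t * x) / x) has_real_derivative (inverse (1 + (t * x)\<^sup>2) * (1 * x)) / x)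
            (at t within {0..1})"
      by (auto intro!: derivative_eq_intros DERIV_arctan[THEN DERIV_chain2])
    moreover have "(inverse (1 + (t * x)\<^sup>2) * (1 * x)) / x = 1 / (1 + (t * x)\<^sup>2)"
      using assms by (simp add: inverse_eq_divide)
    ultimately show "((\<lambda>t. arctan (t * x) / x) has_vector_derivative 1 / (1 + (t * x)\<^sup>2)) (at t within {0..1})"
      by (simp add: has_real_derivative_iff_has_vector_derivative)
  qed simp
  then show ?thesis by simp
qed

text \<open>On the real line: |gauss_cum x| <= sqrt pi / 2 + |arctan x|, using exp(-y) <= 1/(1+y).\<close>

lemma norm_gauss_cum_real: "norm (gauss_cum (complex_of_real x)) \<le> sqrt pi / 2 + pi / 2"
proof -
  define f where "f t = exp (- ((complex_of_real t * complex_of_real x)\<^sup>2))" for t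
  have cont_f: "continuous_on {0..1} f" unfolding f_def by (auto intro!: continuous_intros)
  have norm_f: "norm (f t) \<le> 1 / (1 + (t * x)\<^sup>2)" for t
  proof -
    have "norm (f t) = exp (- ((t * x)\<^sup>2))" unfolding f_def by (simp add: exp_of_real[symmetric])
    also have "\<dots> = 1 / exp ((t * x)\<^sup>2)" by (simp add: exp_minus field_simps)
    also have "\<dots> \<le> 1 / (1 + (t * x)\<^sup>2)"
      by (rule divide_left_mono) (auto simp: add_pos_nonneg)
    finally show ?thesis .
  qed
  have "norm (complex_of_real x * integral {0..1} f) \<le> pi / 2"
  proof (cases "x = 0")
    case False
    have "norm (integral {0..1} f) \<le> integral {0..1} (\<lambda>t. 1 / (1 + (t * x)\<^sup>2))"
      by (rule integral_norm_bound_integral) (auto intro!: integrable_continuous_interval cont_f norm_f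
          has_integral_integrable[OF has_integral_arctan_scaled[OF False]])
    also have "\<dots> = arctan x / x" using has_integral_arctan_scaled[OF False] by (rule integral_unique)
    finally have "\<bar>x\<bar> * norm (integral {0..1} f) \<le> \<bar>x\<bar> * (arctan x / x)"
      by (rule mult_left_mono) auto
    also have "\<dots> = \<bar>arctan x\<bar>" using False
      by (cases "x > 0") (auto simp: abs_if field_simps arctan_less_zero_iff arctan_eq_zero_iff)
    also have "\<dots> \<le> pi / 2" using arctan_bounded[of x] by auto
    finally show ?thesis by (simp add: norm_mult)
  qed simp
  moreover have "gauss_cum (complex_of_real x)
      = complex_of_real (sqrt pi / 2) + complex_of_real x * integral {0..1} f"
    unfolding gauss_cum_def f_def by simp
  ultimately show ?thesis
    using norm_triangle_ineq[of "complex_of_real (sqrt pi / 2)" "complex_of_real x * integral {0..1} f"]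
    by simp
qed

text \<open>On a horizontal strip, compare with the real line by the mean value inequality.\<close>

lemma norm_gauss_cum_strip:
  assumes "\<bar>Im u\<bar> \<le> B"
  shows "norm (gauss_cum u) \<le> sqrt pi / 2 + pi / 2 + exp (B\<^sup>2) * B"
proof -
  define S where "S = {w. Im w \<le> B} \<inter> {w. Im w \<ge> -B}"
  have "convex S" unfolding S_def by (intro convex_Int convex_halfspace_Im_le convex_halfspace_Im_ge)
  then have "norm (gauss_cum u - gauss_cum (complex_of_real (Re u))) \<le> exp (B\<^sup>2) * norm (u - complex_of_real (Re u))"
  proof (rule field_differentiable_bound)
    fix z assume "z \<in> S"
    then have "\<bar>Im z\<bar> \<le> B" unfolding S_def by auto
    then have "(Im z)\<^sup>2 \<le> B\<^sup>2" using power_mono[of "\<bar>Im z\<bar>" B 2] by simp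
    then show "norm (exp (- (z\<^sup>2))) \<le> exp (B\<^sup>2)" using norm_exp_neg_square[of z] by simp
  next
    fix z show "(gauss_cum has_field_derivative exp (- (z\<^sup>2))) (at z within S)"
      using gauss_cum_has_derivative by (rule has_field_derivative_at_within)
  qed (use assms in \<open>auto simp: S_def\<close>)
  moreover have "norm (u - complex_of_real (Re u)) = \<bar>Im u\<bar>"
    by (simp add: complex_eq_iff norm_complex_def)
  moreover have "exp (B\<^sup>2) * \<bar>Im u\<bar> \<le> exp (B\<^sup>2) * B" using assms by (intro mult_left_mono) auto
  ultimately have "norm (gauss_cum u - gauss_cum (complex_of_real (Re u))) \<le> exp (B\<^sup>2) * B"
    by (metis order_trans)
  then show ?thesis
    using norm_gauss_cum_real[of "Re u"] norm_triangle_ineq2[of "gauss_cum u" "gauss_cum (complex_of_real (Re u))"]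
    by linarith
qed

lemma entire_higher_deriv_bound:
  assumes "f holomorphic_on UNIV" "r > 0" "\<And>w. w \<in> ball z r \<Longrightarrow> norm (f w) < B"
  shows "norm ((deriv ^^ n) f z) \<le> fact n * B / r ^ n"
proof (cases "n = 0")
  case True then show ?thesis using assms(3)[of z] assms(2) by simp
next
  case False
  show ?thesis
    by (rule Cauchy_higher_deriv_bound[where y=0])
       (use assms False in \<open>auto intro: holomorphic_on_subset holomorphic_on_imp_continuous_on\<close>)
qed

lemma higher_deriv_gauss_cum_strip_bound: "\<exists>M. \<forall>u. \<bar>Im u\<bar> \<le> B \<longrightarrow> norm ((deriv ^^ n) gauss_cum u) \<le> M"
proof (cases n)
  case 0 then show ?thesis using norm_gauss_cum_strip by auto
next
  case (Suc m)
  have "norm ((deriv ^^ m) (\<lambda>u. exp (- (u\<^sup>2))) u) \<le> fact m * (exp ((\<bar>B\<bar> + 1)\<^sup>2) + 1) / 1 ^ m"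
    if "\<bar>Im u\<bar> \<le> B" for u
  proof (rule entire_higher_deriv_bound)
    fix w assume "w \<in> ball u 1"
    then have "\<bar>Im w - Im u\<bar> < 1" using abs_Im_le_cmod[of "u - w"] by (auto simp: dist_norm)
    then have "\<bar>Im w\<bar> \<le> \<bar>B\<bar> + 1" using that by linarith
    then have "(Im w)\<^sup>2 \<le> (\<bar>B\<bar> + 1)\<^sup>2" using power_mono[of "\<bar>Im w\<bar>" "\<bar>B\<bar> + 1" 2] by simp
    then have "exp ((Im w)\<^sup>2) \<le> exp ((\<bar>B\<bar> + 1)\<^sup>2)" by simp
    then show "norm (exp (- (w\<^sup>2))) < exp ((\<bar>B\<bar> + 1)\<^sup>2) + 1"
      using norm_exp_neg_square[of w] by linarith
  qed (auto intro!: holomorphic_intros)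
  then show ?thesis unfolding Suc funpow_Suc_right o_apply deriv_gauss_cum by auto
qed

section \<open>The function w and its z-derivatives\<close>

text \<open>w(s,z) = A(s) gauss_cum(u(s,z)) with amplitude A(s) = exp(s a^2)/sqrt pi and the affine
  argument u(s,z) = (z - 2 s a)/sqrt(4 s); the n-th z-derivative is A(s) (4 s)^(-n/2) gauss_cum^(n)(u).\<close>

definition w_amp :: "real \<Rightarrow> real \<Rightarrow> real" where
  "w_amp a s = exp (s * a\<^sup>2) / sqrt pi"

definition w_arg :: "real \<Rightarrow> real \<Rightarrow> complex \<Rightarrow> complex" where
  "w_arg a s z = (z - complex_of_real (2 * s * a)) / complex_of_real (sqrt (4 * s))"

definition w_zderiv :: "real \<Rightarrow> nat \<Rightarrow> real \<Rightarrow> complex \<Rightarrow> complex" where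
  "w_zderiv a n s z = complex_of_real (w_amp a s) * (1 / complex_of_real (sqrt (4 * s))) ^ n
      * (deriv ^^ n) gauss_cum (w_arg a s z)"

lemma w_fun_eq_w_zderiv: "w_fun a s z = w_zderiv a 0 s z"
  unfolding w_fun_def w_zderiv_def w_amp_def w_arg_def by simp

lemma w_zderiv_has_derivative:
  "((\<lambda>z. w_zderiv a n s z) has_field_derivative w_zderiv a (Suc n) s z) (at z)"
proof -
  have "((\<lambda>z. (z - complex_of_real (2 * s * a)) * (1 / complex_of_real (sqrt (4 * s))))
      has_field_derivative (1 - 0) * (1 / complex_of_real (sqrt (4 * s)))) (at z)"
    by (intro DERIV_cmult_right DERIV_diff DERIV_ident DERIV_const)
  then have "((\<lambda>z. w_arg a s z) has_field_derivative 1 / complex_of_real (sqrt (4 * s))) (at z)"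
    unfolding w_arg_def by simp
  from DERIV_chain2[OF higher_deriv_gauss_cum_has_derivative this]
  have "((\<lambda>z. (deriv ^^ n) gauss_cum (w_arg a s z)) has_field_derivative
      (deriv ^^ Suc n) gauss_cum (w_arg a s z) * (1 / complex_of_real (sqrt (4 * s)))) (at z)" .
  from DERIV_cmult[OF this, of "complex_of_real (w_amp a s) * (1 / complex_of_real (sqrt (4 * s))) ^ n"]
  show ?thesis unfolding w_zderiv_def by (simp add: algebra_simps)
qed

lemma continuous_on_w_zderiv:
  assumes "0 < \<tau>0"
  shows "continuous_on (UNIV \<times> {\<tau>0..\<tau>}) (\<lambda>(z,s). w_zderiv a n s z)"
proof -
  have "continuous_on (UNIV \<times> {\<tau>0..\<tau>}) (\<lambda>x. w_arg a (snd x) (fst x))"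
    unfolding w_arg_def using assms by (auto intro!: continuous_intros)
  then have "continuous_on (UNIV \<times> {\<tau>0..\<tau>}) (\<lambda>x. (deriv ^^ n) gauss_cum (w_arg a (snd x) (fst x)))"
    by (rule continuous_on_compose2[OF continuous_on_higher_deriv_gauss_cum]) auto
  then show ?thesis unfolding w_zderiv_def w_amp_def split_beta using assms
    by (auto intro!: continuous_intros)
qed

lemma continuous_on_w_zderiv_time: "0 < \<tau>0 \<Longrightarrow> continuous_on {\<tau>0..\<tau>} (\<lambda>s. w_zderiv a n s z)"
  by (rule continuous_on_compose2[OF continuous_on_w_zderiv[of \<tau>0 \<tau> a n], where f="\<lambda>s. (z,s)", simplified])
     (auto intro!: continuous_intros)

text \<open>For s in [tau0,tau] and |Im z| < b the argument u(s,z) stays in the strip |Im u| <= b/sqrt(4 tau0),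
  so each z-derivative of w is bounded there.\<close>

lemma w_zderiv_strip_bound:
  assumes "0 < \<tau>0"
  shows "\<exists>M. \<forall>s\<in>{\<tau>0..\<tau>}. \<forall>z. \<bar>Im z\<bar> < b \<longrightarrow> norm (w_zderiv a n s z) \<le> M"
proof -
  obtain M0 where M0: "\<And>u. \<bar>Im u\<bar> \<le> b / sqrt (4 * \<tau>0) \<Longrightarrow> norm ((deriv ^^ n) gauss_cum u) \<le> M0"
    using higher_deriv_gauss_cum_strip_bound by blast
  have "norm (w_zderiv a n s z) \<le> exp (\<tau> * a\<^sup>2) / sqrt pi * (1 / sqrt (4 * \<tau>0)) ^ n * M0"
    if s: "s \<in> {\<tau>0..\<tau>}" and z: "\<bar>Im z\<bar> < b" for s z
  proof -
    have s_pos: "s > 0" using s assms by auto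
    have "\<bar>Im (w_arg a s z)\<bar> = \<bar>Im z\<bar> / sqrt (4 * s)"
      unfolding w_arg_def using s_pos by (simp add: Im_divide_of_real)
    also have "\<dots> \<le> b / sqrt (4 * s)" using z s_pos by (intro divide_right_mono) auto
    also have "\<dots> \<le> b / sqrt (4 * \<tau>0)" using s assms z by (intro divide_left_mono) auto
    finally have gauss: "norm ((deriv ^^ n) gauss_cum (w_arg a s z)) \<le> M0" by (rule M0)
    have amp: "w_amp a s \<le> exp (\<tau> * a\<^sup>2) / sqrt pi" unfolding w_amp_def using s
      by (intro divide_right_mono) (auto intro!: mult_right_mono)
    have scale: "(1 / sqrt (4 * s)) ^ n \<le> (1 / sqrt (4 * \<tau>0)) ^ n" using s assms
      by (intro power_mono divide_left_mono) auto
    have "norm (w_zderiv a n s z) = w_amp a s * (1 / sqrt (4 * s)) ^ n * norm ((deriv ^^ n) gauss_cum (w_arg a s z))"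
      unfolding w_zderiv_def using s_pos by (simp add: norm_mult norm_power w_amp_def norm_divide)
    also have "\<dots> \<le> exp (\<tau> * a\<^sup>2) / sqrt pi * (1 / sqrt (4 * \<tau>0)) ^ n * M0"
      using amp scale gauss s assms
      by (intro mult_mono) (auto simp: w_amp_def intro!: divide_nonneg_nonneg mult_nonneg_nonneg zero_le_power)
    finally show ?thesis .
  qed
  then show ?thesis by blast
qed

section \<open>The symbol integral Psi_g\<close>

text \<open>heat_symbol tau0 tau n g is the n-th derivative of
  Psi_g(eta) = int_{tau0}^{tau} eta^2 exp(-(tau - s) eta^2) g(s) ds.\<close>

definition heat_symbol :: "real \<Rightarrow> real \<Rightarrow> nat \<Rightarrow> (real \<Rightarrow> complex) \<Rightarrow> complex \<Rightarrow> complex" where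
  "heat_symbol \<tau>0 \<tau> n g \<eta> = integral {\<tau>0..\<tau>} (\<lambda>s. heat_factor \<tau> n \<eta> s * g s)"

lemma heat_symbol_has_derivative:
  assumes "continuous_on {\<tau>0..\<tau>} g"
  shows "(heat_symbol \<tau>0 \<tau> n g has_field_derivative heat_symbol \<tau>0 \<tau> (Suc n) g \<eta>) (at \<eta>)"
    and "(deriv ^^ n) (heat_symbol \<tau>0 \<tau> 0 g) = heat_symbol \<tau>0 \<tau> n g"
proof -
  define W where "W n \<eta> s = heat_factor \<tau> n \<eta> s * g s" for n \<eta> s
  have deriv: "((\<lambda>\<eta>. W n \<eta> s) has_field_derivative W (Suc n) \<eta> s) (at \<eta>)" for n \<eta> s
    unfolding W_def by (rule DERIV_cmult_right, rule heat_factor_has_derivative)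
  have "continuous_on (UNIV \<times> {\<tau>0..\<tau>}) (\<lambda>x. g (snd x))"
    by (rule continuous_on_compose2[OF assms]) (auto intro!: continuous_intros)
  then have cont: "continuous_on (UNIV \<times> {\<tau>0..\<tau>}) (\<lambda>(\<eta>,s). W n \<eta> s)" for n
    unfolding W_def split_beta using continuous_on_heat_factor[of "UNIV \<times> {\<tau>0..\<tau>}" \<tau> n]
    by (auto intro!: continuous_intros simp: split_beta)
  show "(heat_symbol \<tau>0 \<tau> n g has_field_derivative heat_symbol \<tau>0 \<tau> (Suc n) g \<eta>) (at \<eta>)"
    using integral_param_has_field_derivative[of \<tau>0 \<tau> W, OF _ cont, of n] deriv
    unfolding W_def heat_symbol_def by blast
  show "(deriv ^^ n) (heat_symbol \<tau>0 \<tau> 0 g) = heat_symbol \<tau>0 \<tau> n g"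
    using higher_deriv_integral_param[of \<tau>0 \<tau> W, OF _ cont, of n] deriv
    unfolding W_def heat_symbol_def[abs_def] by blast
qed

lemma heat_symbol_holomorphic:
  assumes "continuous_on {\<tau>0..\<tau>} g"
  shows "heat_symbol \<tau>0 \<tau> n g holomorphic_on UNIV"
  using heat_symbol_has_derivative(1)[OF assms] by (auto simp: holomorphic_on_def field_differentiable_def)

lemma has_integral_exp_decay:
  fixes c \<tau> \<tau>0 :: real
  assumes "c > 0" "\<tau>0 \<le> \<tau>"
  shows "((\<lambda>s. exp (- (\<tau> - s) * c)) has_integral (1 - exp (- (\<tau> - \<tau>0) * c)) / c) {\<tau>0..\<tau>}"
proof -
  have "((\<lambda>s. exp (- (\<tau> - s) * c)) has_integral
      ((\<lambda>s. exp (- (\<tau> - s) * c) / c) \<tau> - (\<lambda>s. exp (- (\<tau> - s) * c) / c) \<tau>0)) {\<tau>0..\<tau>}"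
  proof (rule fundamental_theorem_of_calculus)
    fix s :: real
    have "((\<lambda>s. exp (- (\<tau> - s) * c) / c) has_real_derivative exp (- (\<tau> - s) * c) * c / c)
            (at s within {\<tau>0..\<tau>})"
      by (auto intro!: derivative_eq_intros)
    then show "((\<lambda>s. exp (- (\<tau> - s) * c) / c) has_vector_derivative exp (- (\<tau> - s) * c)) (at s within {\<tau>0..\<tau>})"
      using assms by (simp add: has_real_derivative_iff_has_vector_derivative)
  qed (use assms in auto)
  then show ?thesis by (simp add: diff_divide_distrib)
qed

lemma heat_symbol_bound:
  assumes "\<tau>0 \<le> \<tau>" "continuous_on {\<tau>0..\<tau>} g" "\<And>s. s \<in> {\<tau>0..\<tau>} \<Longrightarrow> norm (g s) \<le> M"
  shows "norm (heat_symbol \<tau>0 \<tau> 0 g \<eta>) \<le> (\<tau> - \<tau>0) * (M * (norm \<eta>)\<^sup>2 * exp ((\<tau> - \<tau>0) * (norm \<eta>)\<^sup>2))"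
proof -
  have "norm (heat_symbol \<tau>0 \<tau> 0 g \<eta>)
      \<le> integral {\<tau>0..\<tau>} (\<lambda>s. M * (norm \<eta>)\<^sup>2 * exp ((\<tau> - \<tau>0) * (norm \<eta>)\<^sup>2))"
    unfolding heat_symbol_def
  proof (rule integral_norm_bound_integral)
    show "(\<lambda>s. heat_factor \<tau> 0 \<eta> s * g s) integrable_on {\<tau>0..\<tau>}"
      unfolding heat_factor_0 by (auto intro!: integrable_continuous_interval continuous_intros assms(2))
    fix s assume s: "s \<in> {\<tau>0..\<tau>}"
    have "\<bar>Re (\<eta>\<^sup>2)\<bar> \<le> (norm \<eta>)\<^sup>2" using abs_Re_le_cmod[of "\<eta>\<^sup>2"] by (simp add: norm_power)
    then have "(\<tau> - s) * (- Re (\<eta>\<^sup>2)) \<le> (\<tau> - s) * (norm \<eta>)\<^sup>2" using s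
      by (intro mult_left_mono) auto
    then have "- (\<tau> - s) * Re (\<eta>\<^sup>2) \<le> (\<tau> - s) * (norm \<eta>)\<^sup>2"
      by (metis mult_minus_left mult_minus_right)
    also have "\<dots> \<le> (\<tau> - \<tau>0) * (norm \<eta>)\<^sup>2" using s by (intro mult_right_mono) auto
    finally have "exp (- (\<tau> - s) * Re (\<eta>\<^sup>2)) \<le> exp ((\<tau> - \<tau>0) * (norm \<eta>)\<^sup>2)" by simp
    then have "(norm \<eta>)\<^sup>2 * exp (- (\<tau> - s) * Re (\<eta>\<^sup>2)) * norm (g s)
        \<le> (norm \<eta>)\<^sup>2 * exp ((\<tau> - \<tau>0) * (norm \<eta>)\<^sup>2) * M"
      using assms(3)[OF s] by (intro mult_mono) auto
    then show "norm (heat_factor \<tau> 0 \<eta> s * g s) \<le> M * (norm \<eta>)\<^sup>2 * exp ((\<tau> - \<tau>0) * (norm \<eta>)\<^sup>2)"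
      unfolding norm_mult norm_heat_factor_0 by (simp add: ac_simps)
  qed auto
  then show ?thesis using assms(1) by (simp add: mult_ac)
qed

lemma heat_symbol_bound_sector:
  assumes "\<tau>0 \<le> \<tau>" "continuous_on {\<tau>0..\<tau>} g" "\<And>s. s \<in> {\<tau>0..\<tau>} \<Longrightarrow> norm (g s) \<le> M"
    and pos: "Re (\<eta>\<^sup>2) > 0"
  shows "norm (heat_symbol \<tau>0 \<tau> 0 g \<eta>) \<le> M * (norm \<eta>)\<^sup>2 / Re (\<eta>\<^sup>2)"
proof -
  have M: "M \<ge> 0"
    using assms(3)[of \<tau>] assms(1) by (meson atLeastAtMost_iff norm_ge_zero order_refl order_trans)
  have majorant: "((\<lambda>s. M * (norm \<eta>)\<^sup>2 * exp (- (\<tau> - s) * Re (\<eta>\<^sup>2))) has_integral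
      M * (norm \<eta>)\<^sup>2 * ((1 - exp (- (\<tau> - \<tau>0) * Re (\<eta>\<^sup>2))) / Re (\<eta>\<^sup>2))) {\<tau>0..\<tau>}"
    by (rule has_integral_mult_right[OF has_integral_exp_decay[OF pos assms(1)]])
  have "norm (heat_symbol \<tau>0 \<tau> 0 g \<eta>)
      \<le> integral {\<tau>0..\<tau>} (\<lambda>s. M * (norm \<eta>)\<^sup>2 * exp (- (\<tau> - s) * Re (\<eta>\<^sup>2)))"
    unfolding heat_symbol_def
  proof (rule integral_norm_bound_integral)
    show "(\<lambda>s. heat_factor \<tau> 0 \<eta> s * g s) integrable_on {\<tau>0..\<tau>}"
      unfolding heat_factor_0 by (auto intro!: integrable_continuous_interval continuous_intros assms(2))
    show "(\<lambda>s. M * (norm \<eta>)\<^sup>2 * exp (- (\<tau> - s) * Re (\<eta>\<^sup>2))) integrable_on {\<tau>0..\<tau>}"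
      using majorant by blast
    fix s assume s: "s \<in> {\<tau>0..\<tau>}"
    have "(norm \<eta>)\<^sup>2 * exp (- (\<tau> - s) * Re (\<eta>\<^sup>2)) * norm (g s) \<le> (norm \<eta>)\<^sup>2 * exp (- (\<tau> - s) * Re (\<eta>\<^sup>2)) * M"
      using assms(3)[OF s] by (intro mult_left_mono) auto
    then show "norm (heat_factor \<tau> 0 \<eta> s * g s) \<le> M * (norm \<eta>)\<^sup>2 * exp (- (\<tau> - s) * Re (\<eta>\<^sup>2))"
      unfolding norm_mult norm_heat_factor_0 by (simp add: ac_simps)
  qed
  also have "\<dots> = M * (norm \<eta>)\<^sup>2 * ((1 - exp (- (\<tau> - \<tau>0) * Re (\<eta>\<^sup>2))) / Re (\<eta>\<^sup>2))"
    using majorant by (rule integral_unique)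
  also have "\<dots> \<le> M * (norm \<eta>)\<^sup>2 * (1 / Re (\<eta>\<^sup>2))"
    using M pos by (intro mult_left_mono divide_right_mono) auto
  finally show ?thesis by simp
qed

section \<open>Decay of the derivatives of Psi_g along the line Im eta = a\<close>

lemma jbr_pos: "jbr \<xi> > 0"
  unfolding jbr_def by (simp add: add_pos_nonneg)

lemma jbr_powr_nat: "jbr \<xi> powr (- real n) = 1 / jbr \<xi> ^ n"
  using jbr_pos[of \<xi>] by (simp add: powr_minus powr_realpow divide_inverse)

lemma jbr_le: "jbr \<xi> \<le> 1 + \<bar>\<xi>\<bar>"
proof -
  have "1 + \<xi>\<^sup>2 \<le> (1 + \<bar>\<xi>\<bar>)\<^sup>2" by (simp add: power2_eq_square algebra_simps)
  then have "jbr \<xi> \<le> sqrt ((1 + \<bar>\<xi>\<bar>)\<^sup>2)" unfolding jbr_def by (rule real_sqrt_le_mono)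
  then show ?thesis by simp
qed

lemma Cauchy_estimate_jbr:
  assumes "f holomorphic_on UNIV" "r > 0" "k > 0" "jbr \<xi> \<le> k * r"
    and "\<And>w. w \<in> ball \<zeta> r \<Longrightarrow> norm (f w) < B"
  shows "norm ((deriv ^^ n) f \<zeta>) \<le> fact n * B * k ^ n * jbr \<xi> powr (- real n)"
proof -
  have B: "B > 0" using assms(5)[of \<zeta>] assms(2) by (meson centre_in_ball le_less_trans norm_ge_zero)
  have "norm ((deriv ^^ n) f \<zeta>) \<le> fact n * B / r ^ n"
    by (rule entire_higher_deriv_bound[OF assms(1,2,5)])
  also have "\<dots> = fact n * B * k ^ n / (k * r) ^ n"
    using assms(3) by (simp add: power_mult_distrib)
  also have "\<dots> \<le> fact n * B * k ^ n / jbr \<xi> ^ n"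
    using B assms(2-4) jbr_pos[of \<xi>] by (intro divide_left_mono power_mono mult_pos_pos) auto
  finally show ?thesis by (simp add: jbr_powr_nat)
qed

text \<open>For |xi| >= 8|a| + 8, every eta' within distance |xi|/4 of xi + i a satisfies
  |eta'|^2 <= 2 Re eta'^2, so the sector bound gives |Psi_g(eta')| <= 2 sup|g|.\<close>

lemma heat_symbol_bound_far:
  assumes "\<tau>0 \<le> \<tau>" "continuous_on {\<tau>0..\<tau>} g" "\<And>s. s \<in> {\<tau>0..\<tau>} \<Longrightarrow> norm (g s) \<le> M" "0 \<le> M"
    and far: "8 * \<bar>a\<bar> + 8 \<le> \<bar>\<xi>\<bar>"
    and w: "w \<in> ball (complex_of_real \<xi> + \<i> * complex_of_real a) (\<bar>\<xi>\<bar> / 4)"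
  shows "norm (heat_symbol \<tau>0 \<tau> 0 g w) \<le> 2 * M"
proof -
  have "norm (w - (complex_of_real \<xi> + \<i> * complex_of_real a)) < \<bar>\<xi>\<bar> / 4"
    using w by (simp add: dist_norm norm_minus_commute)
  then have re: "\<bar>Re w - \<xi>\<bar> < \<bar>\<xi>\<bar> / 4" and im: "\<bar>Im w - a\<bar> < \<bar>\<xi>\<bar> / 4"
    using abs_Re_le_cmod[of "w - (complex_of_real \<xi> + \<i> * complex_of_real a)"]
      abs_Im_le_cmod[of "w - (complex_of_real \<xi> + \<i> * complex_of_real a)"] by auto
  have "3 * \<bar>\<xi>\<bar> / 4 \<le> \<bar>Re w\<bar>" using re by linarith
  from power_mono[OF this, of 2] have re2: "9 * \<xi>\<^sup>2 \<le> 16 * (Re w)\<^sup>2"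
    by (simp add: power_divide power_mult_distrib)
  have "\<bar>Im w\<bar> \<le> 3 * \<bar>\<xi>\<bar> / 8" using im far by linarith
  from power_mono[OF this, of 2] have im2: "64 * (Im w)\<^sup>2 \<le> 9 * \<xi>\<^sup>2"
    by (simp add: power_divide power_mult_distrib)
  have "\<xi>\<^sup>2 > 0" using far by auto
  then have sector: "3 * (Im w)\<^sup>2 \<le> (Re w)\<^sup>2" "(Im w)\<^sup>2 < (Re w)\<^sup>2"
    using re2 im2 by linarith+
  have pos: "Re (w\<^sup>2) > 0" using sector(2) by (simp add: Re_power2)
  have "(norm w)\<^sup>2 \<le> 2 * Re (w\<^sup>2)" using sector(1) by (simp add: Re_power2 cmod_power2)
  from mult_left_mono[OF this assms(4)] have "M * (norm w)\<^sup>2 \<le> 2 * M * Re (w\<^sup>2)"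
    by (simp add: ac_simps)
  moreover have "norm (heat_symbol \<tau>0 \<tau> 0 g w) \<le> M * (norm w)\<^sup>2 / Re (w\<^sup>2)"
    using assms(1-3) pos by (rule heat_symbol_bound_sector)
  ultimately show ?thesis using pos_divide_le_eq[OF pos] by (metis order_trans)
qed

text \<open>For |xi| <= R the disc of radius 1 around xi + i a lies in the disc |eta'| <= R + |a| + 1,
  where the crude bound applies.\<close>

lemma heat_symbol_bound_near:
  assumes "\<tau>0 \<le> \<tau>" "continuous_on {\<tau>0..\<tau>} g" "\<And>s. s \<in> {\<tau>0..\<tau>} \<Longrightarrow> norm (g s) \<le> M" "0 \<le> M"
    and near: "\<bar>\<xi>\<bar> \<le> R"
    and w: "w \<in> ball (complex_of_real \<xi> + \<i> * complex_of_real a) 1"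
  shows "norm (heat_symbol \<tau>0 \<tau> 0 g w)
     \<le> (\<tau> - \<tau>0) * (M * (R + \<bar>a\<bar> + 1)\<^sup>2 * exp ((\<tau> - \<tau>0) * (R + \<bar>a\<bar> + 1)\<^sup>2))"
proof -
  define \<zeta> where "\<zeta> = complex_of_real \<xi> + \<i> * complex_of_real a"
  have "norm (w - \<zeta>) < 1" "norm \<zeta> \<le> \<bar>\<xi>\<bar> + \<bar>a\<bar>"
    using w norm_triangle_ineq[of "complex_of_real \<xi>" "\<i> * complex_of_real a"]
    by (simp_all add: \<zeta>_def dist_norm norm_minus_commute norm_mult)
  then have "norm w \<le> R + \<bar>a\<bar> + 1" using near norm_triangle_ineq[of "w - \<zeta>" \<zeta>] by simp
  then have "(norm w)\<^sup>2 \<le> (R + \<bar>a\<bar> + 1)\<^sup>2" by (simp add: power_mono)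
  then have "(\<tau> - \<tau>0) * (M * (norm w)\<^sup>2 * exp ((\<tau> - \<tau>0) * (norm w)\<^sup>2))
      \<le> (\<tau> - \<tau>0) * (M * (R + \<bar>a\<bar> + 1)\<^sup>2 * exp ((\<tau> - \<tau>0) * (R + \<bar>a\<bar> + 1)\<^sup>2))"
    using assms(1,4) by (intro mult_left_mono mult_mono) (auto intro: mult_left_mono)
  with heat_symbol_bound[OF assms(1-3)] show ?thesis by (rule order_trans)
qed

text \<open>Uniformly over all g bounded by M, Psi_g^(n)(xi + i a) = O(<xi>^(-n)): Cauchy estimates on
  discs of radius |xi|/4 for large |xi| and on unit discs (crude bound) for small |xi|.\<close>

lemma heat_symbol_decay:
  assumes "\<tau>0 \<le> \<tau>" "0 \<le> M"
  shows "\<exists>C>0. \<forall>g \<xi>. continuous_on {\<tau>0..\<tau>} g \<longrightarrow> (\<forall>s\<in>{\<tau>0..\<tau>}. norm (g s) \<le> M) \<longrightarrow>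
     norm (heat_symbol \<tau>0 \<tau> n g (complex_of_real \<xi> + \<i> * complex_of_real a)) \<le> C * jbr \<xi> powr (- real n)"
proof -
  define R where "R = 8 * \<bar>a\<bar> + 8"
  define \<rho> where "\<rho> = R + \<bar>a\<bar> + 1"
  define T where "T = \<tau> - \<tau>0"
  define B where "B = T * (M * \<rho>\<^sup>2 * exp (T * \<rho>\<^sup>2)) + 1"
  define C_far where "C_far = fact n * (2 * M + 1) * 8 ^ n"
  define C_near where "C_near = fact n * B * (1 + R) ^ n"
  have R: "R \<ge> 8" unfolding R_def by simp
  have "B > 0" unfolding B_def T_def using assms by (intro add_nonneg_pos mult_nonneg_nonneg) auto
  then have "C_far > 0" "C_near > 0" unfolding C_far_def C_near_def using assms R by auto
  moreover have "norm (heat_symbol \<tau>0 \<tau> n g \<zeta>) \<le> (C_far + C_near) * jbr \<xi> powr (- real n)"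
    if g: "continuous_on {\<tau>0..\<tau>} g" "\<forall>s\<in>{\<tau>0..\<tau>}. norm (g s) \<le> M"
      and \<zeta>: "\<zeta> = complex_of_real \<xi> + \<i> * complex_of_real a" for g \<xi> \<zeta>
  proof -
    note hol = heat_symbol_holomorphic[OF g(1), of 0]
    have "norm ((deriv ^^ n) (heat_symbol \<tau>0 \<tau> 0 g) \<zeta>) \<le> (C_far + C_near) * jbr \<xi> powr (- real n)"
    proof (cases "R \<le> \<bar>\<xi>\<bar>")
      case True
      have "jbr \<xi> \<le> 8 * (\<bar>\<xi>\<bar> / 4)" using jbr_le[of \<xi>] True R by simp
      moreover have "norm (heat_symbol \<tau>0 \<tau> 0 g w) < 2 * M + 1" if "w \<in> ball \<zeta> (\<bar>\<xi>\<bar> / 4)" for w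
        using heat_symbol_bound_far[OF assms(1) g(1) _ assms(2), of a \<xi> w] g(2) True that
        unfolding \<zeta> R_def by fastforce
      ultimately have "norm ((deriv ^^ n) (heat_symbol \<tau>0 \<tau> 0 g) \<zeta>) \<le> C_far * jbr \<xi> powr (- real n)"
        unfolding C_far_def using True R by (intro Cauchy_estimate_jbr[OF hol, where r="\<bar>\<xi>\<bar> / 4"]) auto
      then show ?thesis using \<open>C_near > 0\<close> by (simp add: distrib_right add_increasing2)
    next
      case False
      have "jbr \<xi> \<le> (1 + R) * 1" using jbr_le[of \<xi>] False by simp
      moreover have "norm (heat_symbol \<tau>0 \<tau> 0 g w) < B" if "w \<in> ball \<zeta> 1" for w
        using heat_symbol_bound_near[OF assms(1) g(1) _ assms(2), of \<xi> R w a] g(2) False that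
        unfolding \<zeta> B_def T_def \<rho>_def by fastforce
      ultimately have "norm ((deriv ^^ n) (heat_symbol \<tau>0 \<tau> 0 g) \<zeta>) \<le> C_near * jbr \<xi> powr (- real n)"
        unfolding C_near_def using R by (intro Cauchy_estimate_jbr[OF hol, where r=1]) auto
      then show ?thesis using \<open>C_far > 0\<close> by (simp add: distrib_right add_increasing)
    qed
    then show ?thesis unfolding heat_symbol_has_derivative(2)[OF g(1)] .
  qed
  ultimately show ?thesis by (intro exI[of _ "C_far + C_near"]) auto
qed

section \<open>Part (i): symbol estimates for p\<close>

lemma p_sym_eq_heat_symbol:
  "p_sym a \<tau>0 \<tau> z \<xi> = heat_symbol \<tau>0 \<tau> 0 (\<lambda>s. w_fun a s z) (complex_of_real \<xi> + \<i> * complex_of_real a)"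
  unfolding p_sym_def heat_symbol_def heat_factor_0 integral_mult_right[symmetric]
  by (simp add: mult.assoc)

lemma p_sym_mixed_derivative:
  assumes "0 < \<tau>0"
  shows "(deriv ^^ \<alpha>) (\<lambda>z'. (vderiv ^^ \<beta>) (\<lambda>\<xi>'. p_sym a \<tau>0 \<tau> z' \<xi>') \<xi>) z
       = heat_symbol \<tau>0 \<tau> \<beta> (\<lambda>s. w_zderiv a \<alpha> s z) (complex_of_real \<xi> + \<i> * complex_of_real a)"
proof -
  define \<zeta> where "\<zeta> = complex_of_real \<xi> + \<i> * complex_of_real a"
  have xi_derivs: "(vderiv ^^ \<beta>) (\<lambda>\<xi>'. p_sym a \<tau>0 \<tau> z' \<xi>') \<xi>
      = integral {\<tau>0..\<tau>} (\<lambda>s. heat_factor \<tau> \<beta> \<zeta> s * w_zderiv a 0 s z')" for z'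
  proof -
    have "(vderiv ^^ \<beta>) (\<lambda>\<xi>'. heat_symbol \<tau>0 \<tau> 0 (\<lambda>s. w_fun a s z') (complex_of_real \<xi>' + \<i> * complex_of_real a))
        = (\<lambda>\<xi>'. heat_symbol \<tau>0 \<tau> \<beta> (\<lambda>s. w_fun a s z') (complex_of_real \<xi>' + \<i> * complex_of_real a))"
      by (rule vderiv_funpow_line, rule heat_symbol_has_derivative(1))
         (simp add: w_fun_eq_w_zderiv continuous_on_w_zderiv_time[OF assms])
    then show ?thesis
      unfolding p_sym_eq_heat_symbol \<zeta>_def heat_symbol_def w_fun_eq_w_zderiv by (simp add: fun_eq_iff)
  qed
  define W where "W n z s = heat_factor \<tau> \<beta> \<zeta> s * w_zderiv a n s z" for n z s
  have deriv: "((\<lambda>z. W n z s) has_field_derivative W (Suc n) z s) (at z)" for n z s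
    unfolding W_def by (rule DERIV_cmult, rule w_zderiv_has_derivative)
  have "continuous_on (UNIV \<times> {\<tau>0..\<tau>}) (\<lambda>x. heat_factor \<tau> \<beta> \<zeta> (snd x))"
    by (rule continuous_on_compose2[OF continuous_on_heat_factor[of UNIV \<tau> \<beta>], where f="\<lambda>x. (\<zeta>, snd x)", simplified])
       (auto intro!: continuous_intros)
  then have cont: "continuous_on (UNIV \<times> {\<tau>0..\<tau>}) (\<lambda>(z,s). W n z s)" for n
    unfolding W_def split_beta using continuous_on_w_zderiv[OF assms, of \<tau> a n]
    by (auto intro!: continuous_intros simp: split_beta)
  show ?thesis
    unfolding xi_derivs higher_deriv_integral_param[of \<tau>0 \<tau> W, OF deriv cont, unfolded W_def]
    unfolding heat_symbol_def \<zeta>_def ..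
qed

text \<open>Part (i): the z-derivatives of w are bounded on the strip, so the decay estimate for Psi_g applies.\<close>

lemma p_sym_symbol_estimate:
  assumes "0 < \<tau>0" "\<tau>0 < \<tau>" "b > 0"
  shows "\<exists>C>0. \<forall>z \<xi>. \<bar>Im z\<bar> < b \<longrightarrow>
     norm ((deriv ^^ \<alpha>) (\<lambda>z'. (vderiv ^^ \<beta>) (\<lambda>\<xi>'. p_sym a \<tau>0 \<tau> z' \<xi>') \<xi>) z) \<le> C * jbr \<xi> powr (- real \<beta>)"
proof -
  obtain M where M: "\<And>s z. s \<in> {\<tau>0..\<tau>} \<Longrightarrow> \<bar>Im z\<bar> < b \<Longrightarrow> norm (w_zderiv a \<alpha> s z) \<le> M"
    using w_zderiv_strip_bound[OF assms(1), of \<tau> b a \<alpha>] by blast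
  have "norm (w_zderiv a \<alpha> \<tau>0 0) \<le> M" using M[of \<tau>0 0] assms by simp
  then have "0 \<le> M" by (rule order_trans[OF norm_ge_zero])
  then obtain C where "C > 0" and C: "\<And>g \<xi>. continuous_on {\<tau>0..\<tau>} g \<Longrightarrow> (\<forall>s\<in>{\<tau>0..\<tau>}. norm (g s) \<le> M) \<Longrightarrow>
      norm (heat_symbol \<tau>0 \<tau> \<beta> g (complex_of_real \<xi> + \<i> * complex_of_real a)) \<le> C * jbr \<xi> powr (- real \<beta>)"
    using heat_symbol_decay[of \<tau>0 \<tau> M \<beta> a] assms(2) by auto
  show ?thesis
  proof (intro exI[of _ C] conjI allI impI)
    fix z \<xi> assume "\<bar>Im z\<bar> < b"
    then show "norm ((deriv ^^ \<alpha>) (\<lambda>z'. (vderiv ^^ \<beta>) (\<lambda>\<xi>'. p_sym a \<tau>0 \<tau> z' \<xi>') \<xi>) z)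
        \<le> C * jbr \<xi> powr (- real \<beta>)"
      unfolding p_sym_mixed_derivative[OF assms(1)]
      by (intro C continuous_on_w_zderiv_time[OF assms(1)] ballI M)
  qed fact
qed

section \<open>Part (ii): the principal part of p\<close>

text \<open>For real x, w(s,x) = A(s) gauss_cum(v(s,x)) with the real argument v(s,x) = (x - 2 s a)/sqrt(4 s);
  its time derivative is A(s) v_s exp(-v^2) + A(s) a^2 gauss_cum(v).\<close>

definition w_argr :: "real \<Rightarrow> real \<Rightarrow> real \<Rightarrow> real" where
  "w_argr a s x = (x - 2 * s * a) / sqrt (4 * s)"

definition w_time_deriv :: "real \<Rightarrow> real \<Rightarrow> real \<Rightarrow> complex" where
  "w_time_deriv a s x =
     complex_of_real (w_amp a s * (- w_argr a s x / (2 * s) - a / sqrt s) * exp (- ((w_argr a s x)\<^sup>2)))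
     + complex_of_real (w_amp a s * a\<^sup>2) * gauss_cum (complex_of_real (w_argr a s x))"

lemma w_fun_real: "w_fun a s (complex_of_real x) = complex_of_real (w_amp a s) * gauss_cum (complex_of_real (w_argr a s x))"
  unfolding w_fun_def w_amp_def w_argr_def by simp

lemma w_argr_has_derivative:
  assumes "s > 0"
  shows "((\<lambda>s. w_argr a s x) has_real_derivative (- w_argr a s x / (2 * s) - a / sqrt s)) (at s)"
proof -
  have sqrt4: "sqrt (4 * s) = 2 * sqrt s" by (simp add: real_sqrt_mult)
  have sq: "sqrt s * sqrt s = s" "sqrt s > 0" using assms by simp_all
  have "((\<lambda>s. (x - 2 * s * a) / sqrt (4 * s)) has_real_derivative
     ((0 - 2 * 1 * a) * sqrt (4 * s) - (x - 2 * s * a) * (inverse (sqrt (4 * s)) / 2 * (4 * 1)))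
       / (sqrt (4 * s) * sqrt (4 * s))) (at s)"
    using assms by (auto intro!: derivative_eq_intros)
  moreover have "((0 - 2 * 1 * a) * sqrt (4 * s) - (x - 2 * s * a) * (inverse (sqrt (4 * s)) / 2 * (4 * 1)))
       / (sqrt (4 * s) * sqrt (4 * s)) = - w_argr a s x / (2 * s) - a / sqrt s"
    unfolding w_argr_def sqrt4 using sq assms
    by (simp add: field_simps) (simp add: mult.assoc[symmetric])
  ultimately show ?thesis unfolding w_argr_def by simp
qed

lemma w_fun_time_has_derivative:
  assumes "s > 0"
  shows "((\<lambda>s. w_fun a s (complex_of_real x)) has_vector_derivative w_time_deriv a s x) (at s)"
proof -
  have "((\<lambda>s. exp (s * a\<^sup>2)) has_real_derivative exp (s * a\<^sup>2) * a\<^sup>2) (at s)"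
    by (auto intro!: derivative_eq_intros)
  from DERIV_cdivide[OF this, of "sqrt pi"]
  have "((\<lambda>s. w_amp a s) has_real_derivative w_amp a s * a\<^sup>2) (at s)"
    unfolding w_amp_def by simp
  then have amp: "((\<lambda>s. complex_of_real (w_amp a s)) has_vector_derivative complex_of_real (w_amp a s * a\<^sup>2)) (at s)"
    by (rule has_vector_derivative_of_real)
  have "((\<lambda>s. complex_of_real (w_argr a s x)) has_vector_derivative
      complex_of_real (- w_argr a s x / (2 * s) - a / sqrt s)) (at s)"
    by (rule has_vector_derivative_of_real[OF w_argr_has_derivative[OF assms]])
  from field_vector_diff_chain_at[OF this gauss_cum_has_derivative]
  have "((\<lambda>s. gauss_cum (complex_of_real (w_argr a s x))) has_vector_derivative
      complex_of_real (- w_argr a s x / (2 * s) - a / sqrt s) * exp (- ((complex_of_real (w_argr a s x))\<^sup>2))) (at s)"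
    by (simp add: o_def)
  from has_vector_derivative_mult[OF amp this]
  show ?thesis unfolding w_fun_real w_time_deriv_def
    by (simp add: exp_of_real[symmetric] algebra_simps)
qed

text \<open>For real x and s in [tau0,tau], w(s,x) and its time derivative are bounded independently of x,
  using |gauss_cum| <= sqrt pi/2 + pi/2 on the real line and |v| exp(-v^2) <= 1.\<close>

lemma w_fun_real_bound:
  assumes "s \<le> \<tau>"
  shows "norm (w_fun a s (complex_of_real x)) \<le> w_amp a \<tau> * (sqrt pi / 2 + pi / 2)"
proof -
  have "w_amp a s \<le> w_amp a \<tau>" unfolding w_amp_def using assms
    by (intro divide_right_mono) (auto intro!: mult_right_mono)
  moreover have "w_amp a s > 0" unfolding w_amp_def by simp
  ultimately show ?thesis unfolding w_fun_real norm_mult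
    using norm_gauss_cum_real[of "w_argr a s x"] by (intro mult_mono) auto
qed

lemma abs_mult_exp_neg_square_le_1: "\<bar>v\<bar> * exp (- (v\<^sup>2)) \<le> (1::real)"
proof -
  have "\<bar>v\<bar> \<le> 1 + v\<^sup>2"
  proof (cases "\<bar>v\<bar> \<le> 1")
    case False
    then have "\<bar>v\<bar> * 1 \<le> \<bar>v\<bar> * \<bar>v\<bar>" by (intro mult_left_mono) auto
    then show ?thesis by (simp add: power2_eq_square)
  qed (simp add: add_increasing2)
  also have "\<dots> \<le> exp (v\<^sup>2)" by simp
  finally show ?thesis by (simp add: exp_minus field_simps)
qed

lemma w_time_deriv_bound:
  assumes "0 < \<tau>0" "s \<in> {\<tau>0..\<tau>}"
  shows "norm (w_time_deriv a s x)
     \<le> w_amp a \<tau> * (1 / (2 * \<tau>0) + \<bar>a\<bar> / sqrt \<tau>0) + w_amp a \<tau> * a\<^sup>2 * (sqrt pi / 2 + pi / 2)"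
proof -
  define v where "v = w_argr a s x"
  have s: "0 < s" "\<tau>0 \<le> s" "s \<le> \<tau>" using assms by auto
  have amp: "0 < w_amp a s" "w_amp a s \<le> w_amp a \<tau>" unfolding w_amp_def using s
    by (auto intro!: divide_right_mono mult_right_mono)
  have "\<bar>- v / (2 * s) - a / sqrt s\<bar> \<le> \<bar>- v / (2 * s)\<bar> + \<bar>a / sqrt s\<bar>"
    by (rule abs_triangle_ineq4)
  also have "\<dots> = \<bar>v\<bar> / (2 * s) + \<bar>a\<bar> / sqrt s" using s by (simp add: abs_divide)
  finally have "\<bar>- v / (2 * s) - a / sqrt s\<bar> * exp (- v\<^sup>2) \<le> (\<bar>v\<bar> / (2 * s) + \<bar>a\<bar> / sqrt s) * exp (- v\<^sup>2)"
    by (intro mult_right_mono) auto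
  also have "\<dots> = (\<bar>v\<bar> * exp (- v\<^sup>2)) / (2 * s) + \<bar>a\<bar> / sqrt s * exp (- v\<^sup>2)"
    by (simp add: algebra_simps)
  also have "\<dots> \<le> 1 / (2 * s) + \<bar>a\<bar> / sqrt s * 1"
    using abs_mult_exp_neg_square_le_1[of v] s by (intro add_mono divide_right_mono mult_left_mono) auto
  also have "\<dots> \<le> 1 / (2 * \<tau>0) + \<bar>a\<bar> / sqrt \<tau>0"
  proof (rule add_mono)
    show "1 / (2 * s) \<le> 1 / (2 * \<tau>0)" using s assms by (intro divide_left_mono) auto
    show "\<bar>a\<bar> / sqrt s * 1 \<le> \<bar>a\<bar> / sqrt \<tau>0" using s assms by (simp add: divide_left_mono)
  qed
  finally have gauss_term: "\<bar>- v / (2 * s) - a / sqrt s\<bar> * exp (- v\<^sup>2) \<le> 1 / (2 * \<tau>0) + \<bar>a\<bar> / sqrt \<tau>0" .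
  have "norm (w_time_deriv a s x)
      \<le> norm (complex_of_real (w_amp a s * (- v / (2 * s) - a / sqrt s) * exp (- v\<^sup>2)))
        + norm (complex_of_real (w_amp a s * a\<^sup>2) * gauss_cum (complex_of_real v))"
    unfolding w_time_deriv_def v_def[symmetric] by (rule norm_triangle_ineq)
  also have "\<dots> = w_amp a s * (\<bar>- v / (2 * s) - a / sqrt s\<bar> * exp (- v\<^sup>2))
        + w_amp a s * a\<^sup>2 * norm (gauss_cum (complex_of_real v))"
    unfolding norm_mult norm_of_real using amp(1) by (simp add: abs_mult)
  also have "\<dots> \<le> w_amp a \<tau> * (1 / (2 * \<tau>0) + \<bar>a\<bar> / sqrt \<tau>0) + w_amp a \<tau> * a\<^sup>2 * (sqrt pi / 2 + pi / 2)"
    using amp gauss_term norm_gauss_cum_real[of v] by (intro add_mono mult_mono) auto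
  finally show ?thesis .
qed

lemma continuous_on_w_time_deriv:
  assumes "0 < \<tau>0"
  shows "continuous_on {\<tau>0..\<tau>} (\<lambda>s. w_time_deriv a s x)"
proof -
  have argr: "continuous_on {\<tau>0..\<tau>} (\<lambda>s. w_argr a s x)"
    unfolding w_argr_def using assms by (auto intro!: continuous_intros)
  have "continuous_on {\<tau>0..\<tau>} (\<lambda>s. gauss_cum (complex_of_real (w_argr a s x)))"
    by (rule continuous_on_compose2[OF holomorphic_on_imp_continuous_on[OF gauss_cum_holomorphic]])
       (auto intro!: continuous_intros argr)
  then show ?thesis
    unfolding w_time_deriv_def w_amp_def using assms argr by (auto intro!: continuous_intros)
qed

definition heat_exp :: "real \<Rightarrow> real \<Rightarrow> real \<Rightarrow> complex" where
  "heat_exp a \<xi> t = exp (- complex_of_real t * (complex_of_real \<xi> + \<i> * complex_of_real a)\<^sup>2)"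

lemma norm_heat_exp: "norm (heat_exp a \<xi> t) = exp (t * a\<^sup>2) * exp (- t * \<xi>\<^sup>2)"
  unfolding heat_exp_def by (simp add: norm_exp_eq_Re Re_power2 exp_add[symmetric] algebra_simps)

text \<open>Integration by parts in s, using eta^2 exp(-(tau - s) eta^2) = d/ds exp(-(tau - s) eta^2).\<close>

lemma p_sym_minus_w_by_parts:
  assumes "0 < \<tau>0" "\<tau>0 \<le> \<tau>"
  shows "p_sym a \<tau>0 \<tau> (complex_of_real x) \<xi> - w_fun a \<tau> (complex_of_real x)
       = - (heat_exp a \<xi> (\<tau> - \<tau>0) * w_fun a \<tau>0 (complex_of_real x))
         - integral {\<tau>0..\<tau>} (\<lambda>s. heat_exp a \<xi> (\<tau> - s) * w_time_deriv a s x)"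
proof -
  define \<zeta> where "\<zeta> = complex_of_real \<xi> + \<i> * complex_of_real a"
  define E where "E s = heat_exp a \<xi> (\<tau> - s)" for s
  define W where "W s = w_fun a s (complex_of_real x)" for s
  define D where "D s = w_time_deriv a s x" for s
  have dE: "(E has_vector_derivative \<zeta>\<^sup>2 * E s) (at s)" for s
  proof -
    have "((\<lambda>z. exp (- (complex_of_real \<tau> - z) * \<zeta>\<^sup>2)) has_field_derivative
        exp (- (complex_of_real \<tau> - complex_of_real s) * \<zeta>\<^sup>2) * (- (0 - 1) * \<zeta>\<^sup>2)) (at (complex_of_real s))"
      by (auto intro!: derivative_eq_intros)
    from has_vector_derivative_real_field[OF this]
    show ?thesis unfolding E_def heat_exp_def \<zeta>_def by (simp add: mult.commute)
  qed
  have "((\<lambda>s. E s * D s + \<zeta>\<^sup>2 * E s * W s) has_integral (E \<tau> * W \<tau> - E \<tau>0 * W \<tau>0)) {\<tau>0..\<tau>}"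
  proof (rule fundamental_theorem_of_calculus[OF assms(2)])
    fix s assume "s \<in> {\<tau>0..\<tau>}"
    then have "((\<lambda>s. E s * W s) has_vector_derivative E s * D s + \<zeta>\<^sup>2 * E s * W s) (at s)"
      using has_vector_derivative_mult[OF dE w_fun_time_has_derivative] assms(1)
      unfolding W_def D_def by simp
    then show "((\<lambda>s. E s * W s) has_vector_derivative E s * D s + \<zeta>\<^sup>2 * E s * W s) (at s within {\<tau>0..\<tau>})"
      by (rule has_vector_derivative_at_within)
  qed
  moreover have "(\<lambda>s. heat_factor \<tau> 0 \<zeta> s * W s) integrable_on {\<tau>0..\<tau>}"
    unfolding heat_factor_0 W_def w_fun_eq_w_zderiv
    by (auto intro!: integrable_continuous_interval continuous_intros continuous_on_w_zderiv_time assms(1))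
  ultimately have "((\<lambda>s. (E s * D s + \<zeta>\<^sup>2 * E s * W s) - heat_factor \<tau> 0 \<zeta> s * W s) has_integral
      (E \<tau> * W \<tau> - E \<tau>0 * W \<tau>0 - p_sym a \<tau>0 \<tau> (complex_of_real x) \<xi>)) {\<tau>0..\<tau>}"
    unfolding p_sym_eq_heat_symbol heat_symbol_def \<zeta>_def[symmetric] W_def[symmetric]
    by (intro has_integral_diff) auto
  moreover have "(\<lambda>s. (E s * D s + \<zeta>\<^sup>2 * E s * W s) - heat_factor \<tau> 0 \<zeta> s * W s) = (\<lambda>s. E s * D s)"
    unfolding heat_factor_0 E_def heat_exp_def \<zeta>_def by (simp add: fun_eq_iff)
  ultimately have "integral {\<tau>0..\<tau>} (\<lambda>s. E s * D s)
      = E \<tau> * W \<tau> - E \<tau>0 * W \<tau>0 - p_sym a \<tau>0 \<tau> (complex_of_real x) \<xi>"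
    by (simp add: integral_unique)
  moreover have "E \<tau> = 1" unfolding E_def heat_exp_def by simp
  ultimately show ?thesis unfolding E_def W_def D_def by (simp add: algebra_simps)
qed

lemma exp_neg_le_decay:
  fixes T c :: real
  assumes "T > 0" "c \<ge> 0"
  shows "exp (- T * c) \<le> (1 + 1 / T) / (1 + c)"
proof -
  have "exp (- T * c) = 1 / exp (T * c)" by (simp add: exp_minus inverse_eq_divide)
  also have "\<dots> \<le> 1 / (1 + T * c)"
    using assms by (intro divide_left_mono) (auto simp: add_pos_nonneg)
  also have "\<dots> \<le> (1 + 1 / T) / (1 + c)"
    using assms by (simp add: divide_simps add_pos_nonneg) (simp add: algebra_simps)
  finally show ?thesis .
qed

lemma integral_exp_neg_le_decay:
  fixes \<tau>0 \<tau> c :: real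
  assumes "\<tau>0 \<le> \<tau>" "c \<ge> 0"
  shows "integral {\<tau>0..\<tau>} (\<lambda>s. exp (- (\<tau> - s) * c)) \<le> (\<tau> - \<tau>0 + 1) / (1 + c)"
proof (cases "c = 0")
  case True then show ?thesis using assms by simp
next
  case False
  define e where "e = exp (- (\<tau> - \<tau>0) * c)"
  have c: "c > 0" using False assms by simp
  have "1 + (- (\<tau> - \<tau>0) * c) \<le> e" unfolding e_def by (rule exp_ge_add_one_self)
  then have "1 - e \<le> (\<tau> - \<tau>0) * c" by (simp add: algebra_simps)
  moreover have "1 - e \<le> 1" unfolding e_def by simp
  then have "c * (1 - e) \<le> c * 1" using c by (intro mult_left_mono) auto
  moreover have "(1 - e) * (1 + c) = (1 - e) + c * (1 - e)" "(\<tau> - \<tau>0 + 1) * c = (\<tau> - \<tau>0) * c + c"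
    by (simp_all add: algebra_simps)
  ultimately have "(1 - e) * (1 + c) \<le> (\<tau> - \<tau>0 + 1) * c" by linarith
  then have "(1 - e) / c \<le> (\<tau> - \<tau>0 + 1) / (1 + c)" using c by (simp add: divide_simps add_pos_nonneg)
  then show ?thesis
    using integral_unique[OF has_integral_exp_decay[OF c assms(1)]] unfolding e_def by simp
qed

lemma heat_exp_boundary_bound:
  assumes "T > 0" "norm W \<le> M"
  shows "norm (heat_exp a \<xi> T * W) \<le> exp (T * a\<^sup>2) * M * (1 + 1 / T) / (1 + \<xi>\<^sup>2)"
proof -
  have "norm (heat_exp a \<xi> T * W) \<le> exp (T * a\<^sup>2) * exp (- T * \<xi>\<^sup>2) * M"
    unfolding norm_mult norm_heat_exp using assms(2) by (intro mult_left_mono) auto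
  also have "\<dots> \<le> exp (T * a\<^sup>2) * ((1 + 1 / T) / (1 + \<xi>\<^sup>2)) * M"
    using exp_neg_le_decay[OF assms(1), of "\<xi>\<^sup>2"] order_trans[OF norm_ge_zero assms(2)]
    by (intro mult_right_mono mult_left_mono) auto
  finally show ?thesis by (simp add: ac_simps)
qed

lemma heat_exp_integral_bound:
  assumes "\<tau>0 \<le> \<tau>" "continuous_on {\<tau>0..\<tau>} D" "\<And>s. s \<in> {\<tau>0..\<tau>} \<Longrightarrow> norm (D s) \<le> M"
  shows "norm (integral {\<tau>0..\<tau>} (\<lambda>s. heat_exp a \<xi> (\<tau> - s) * D s))
     \<le> exp ((\<tau> - \<tau>0) * a\<^sup>2) * M * (\<tau> - \<tau>0 + 1) / (1 + \<xi>\<^sup>2)"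
proof -
  have M: "M \<ge> 0" using assms(1) order_trans[OF norm_ge_zero assms(3)[of \<tau>]] by simp
  have "norm (integral {\<tau>0..\<tau>} (\<lambda>s. heat_exp a \<xi> (\<tau> - s) * D s))
      \<le> integral {\<tau>0..\<tau>} (\<lambda>s. exp ((\<tau> - \<tau>0) * a\<^sup>2) * M * exp (- (\<tau> - s) * \<xi>\<^sup>2))"
  proof (rule integral_norm_bound_integral)
    show "(\<lambda>s. heat_exp a \<xi> (\<tau> - s) * D s) integrable_on {\<tau>0..\<tau>}"
      unfolding heat_exp_def by (intro integrable_continuous_interval continuous_intros assms(2))
    show "(\<lambda>s. exp ((\<tau> - \<tau>0) * a\<^sup>2) * M * exp (- (\<tau> - s) * \<xi>\<^sup>2)) integrable_on {\<tau>0..\<tau>}"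
      by (intro integrable_continuous_interval continuous_intros)
    fix s assume s: "s \<in> {\<tau>0..\<tau>}"
    have "norm (heat_exp a \<xi> (\<tau> - s)) \<le> exp ((\<tau> - \<tau>0) * a\<^sup>2) * exp (- (\<tau> - s) * \<xi>\<^sup>2)"
      unfolding norm_heat_exp using s by (intro mult_right_mono) (auto intro: mult_right_mono)
    from mult_mono[OF this assms(3)[OF s]]
    show "norm (heat_exp a \<xi> (\<tau> - s) * D s) \<le> exp ((\<tau> - \<tau>0) * a\<^sup>2) * M * exp (- (\<tau> - s) * \<xi>\<^sup>2)"
      unfolding norm_mult by (simp add: ac_simps)
  qed
  also have "\<dots> = exp ((\<tau> - \<tau>0) * a\<^sup>2) * M * integral {\<tau>0..\<tau>} (\<lambda>s. exp (- (\<tau> - s) * \<xi>\<^sup>2))"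
    by (rule integral_mult_right)
  also have "\<dots> \<le> exp ((\<tau> - \<tau>0) * a\<^sup>2) * M * ((\<tau> - \<tau>0 + 1) / (1 + \<xi>\<^sup>2))"
    by (rule mult_left_mono[OF integral_exp_neg_le_decay]) (use assms M in auto)
  finally show ?thesis by simp
qed

lemma p_sym_principal_part:
  assumes "0 < \<tau>0" "\<tau>0 < \<tau>"
  shows "\<exists>C>0. \<forall>x \<xi>::real.
     norm (p_sym a \<tau>0 \<tau> (complex_of_real x) \<xi> - w_fun a \<tau> (complex_of_real x)) \<le> C * jbr \<xi> powr (-2)"
proof -
  define T where "T = \<tau> - \<tau>0"
  define Mw where "Mw = w_amp a \<tau> * (sqrt pi / 2 + pi / 2)"
  define MD where "MD = w_amp a \<tau> * (1 / (2 * \<tau>0) + \<bar>a\<bar> / sqrt \<tau>0) + w_amp a \<tau> * a\<^sup>2 * (sqrt pi / 2 + pi / 2)"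
  define C where "C = exp (T * a\<^sup>2) * (Mw * (1 + 1 / T) + MD * (T + 1))"
  have T: "T > 0" unfolding T_def using assms by simp
  have "w_amp a \<tau> > 0" "sqrt pi / 2 + pi / 2 > 0"
    unfolding w_amp_def using pi_gt_zero by (simp_all add: add_pos_pos)
  then have "C > 0" unfolding C_def Mw_def MD_def using T assms by (intro mult_pos_pos add_pos_nonneg) auto
  moreover have "norm (p_sym a \<tau>0 \<tau> (complex_of_real x) \<xi> - w_fun a \<tau> (complex_of_real x)) \<le> C / (1 + \<xi>\<^sup>2)"
    for x \<xi> :: real
  proof -
    have "norm (p_sym a \<tau>0 \<tau> (complex_of_real x) \<xi> - w_fun a \<tau> (complex_of_real x))
        \<le> norm (heat_exp a \<xi> T * w_fun a \<tau>0 (complex_of_real x))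
          + norm (integral {\<tau>0..\<tau>} (\<lambda>s. heat_exp a \<xi> (\<tau> - s) * w_time_deriv a s x))"
      unfolding p_sym_minus_w_by_parts[OF assms(1) less_imp_le[OF assms(2)]] T_def
      using norm_triangle_ineq4[of "- (heat_exp a \<xi> (\<tau> - \<tau>0) * w_fun a \<tau>0 (complex_of_real x))"]
      by simp
    also have "\<dots> \<le> exp (T * a\<^sup>2) * Mw * (1 + 1 / T) / (1 + \<xi>\<^sup>2) + exp (T * a\<^sup>2) * MD * (T + 1) / (1 + \<xi>\<^sup>2)"
      unfolding Mw_def MD_def T_def using assms
      by (intro add_mono heat_exp_boundary_bound heat_exp_integral_bound w_fun_real_bound
          continuous_on_w_time_deriv w_time_deriv_bound) auto
    also have "\<dots> = C / (1 + \<xi>\<^sup>2)"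
      unfolding C_def by (simp add: add_divide_distrib distrib_left mult.assoc)
    finally show ?thesis .
  qed
  moreover have "jbr \<xi> powr (-2) = 1 / (1 + \<xi>\<^sup>2)" for \<xi>
    using jbr_powr_nat[of \<xi> 2] unfolding jbr_def by simp
  ultimately show ?thesis by (intro exI[of _ C]) auto
qed

theorem mainTheorem6:
  fixes a \<tau>0 \<tau> :: real
  assumes "0 < \<tau>0" and "\<tau>0 < \<tau>"
  shows "(\<forall>b>0. \<forall>\<alpha> \<beta>::nat. \<exists>C>0. \<forall>z \<xi>. \<bar>Im z\<bar> < b \<longrightarrow>
            norm (((deriv ^^ \<alpha>) (\<lambda>z'. (vderiv ^^ \<beta>) (\<lambda>\<xi>'. p_sym a \<tau>0 \<tau> z' \<xi>') \<xi>)) z)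
              \<le> C * jbr \<xi> powr (- real \<beta>))
       \<and> (\<exists>C>0. \<forall>x \<xi>::real.
            norm (p_sym a \<tau>0 \<tau> (complex_of_real x) \<xi> - w_fun a \<tau> (complex_of_real x))
              \<le> C * jbr \<xi> powr (-2))"
  using p_sym_symbol_estimate[OF assms] p_sym_principal_part[OF assms] by blast

end
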